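(* Let $V,W$ be finite-dimensional real vector spaces and let $\mathcal{R}=(\mathcal{R}^0,\mathcal{R}^1,\dots)$ be a sequence in $\mathscr{P}(V;W)$. Let $k$ and $a_1,\dots,a_k\in\mathscr{F}(V)$ be as defined in the context. Suppose that $\mathrm{Kern}(\mathrm{Eval}_{\mathcal{R}})$ is an ideal of $\mathscr{P}(V)[\lambda]$. Then $a_i\in\mathscr{P}(V)$ for all $i=1,\dots,k$, that is, $P_{\min}(\mathcal{R})\in\mathscr{P}(V)[\lambda]$.
   Context: $\mathscr{P}(V)$ and $\mathscr{F}(V)$ are the rings of real polynomial and rational functions on $V$. $\mathscr{P}(V;W)$ and $\mathscr{F}(V;W)$ are the modules of $W$-valued polynomial and rational functions. $\mathscr{A}_j(\mathcal{R})=\{X\in V: \mathcal{R}^0(X),\dots,\mathcal{R}^j(X)\text{ linearly dependent in }W\}$. Let $k\ge0$ be the smallest integer with $\mathscr{A}_k(\mathcal{R})=V$. Then $a_1,\dots,a_k\in\mathscr{F}(V)$ are the unique rational functions with $\mathcal{R}^k=-\sum_{i=1}^k a_i\mathcal{R}^{k-i}$ in $\mathscr{F}(V;W)$, and $P_{\min}(\mathcal{R})=\lambda^k+\sum_{i=1}^k a_i\lambda^{k-i}$. $\mathrm{Eval}_{\mathcal{R}}\colon\mathscr{P}(V)[\lambda]\to\mathscr{P}(V;W)$ is the unique $\mathscr{P}(V)$-module homomorphism with $\lambda^i\mapsto\mathcal{R}^i$. *)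

theory Defs
  imports "HOL-Analysis.Analysis" "HOL-Computational_Algebra.Polynomial" "HOL-Library.Function_Algebras"
begin

text \<open>Real polynomial functions on a finite-dimensional real vector space V
 (modelled as a type of class euclidean_space): the smallest class of functions
 containing the constants and the linear functionals and closed under + and *.\<close>
inductive polyfun :: "('v::euclidean_space \<Rightarrow> real) \<Rightarrow> bool" where
  const: "polyfun (\<lambda>_. c)"
| lin: "polyfun (\<lambda>x. x \<bullet> b)"
| add: "polyfun f \<Longrightarrow> polyfun g \<Longrightarrow> polyfun (\<lambda>x. f x + g x)"
| mult: "polyfun f \<Longrightarrow> polyfun g \<Longrightarrow> polyfun (\<lambda>x. f x * g x)"

definition polyfun_vec :: "('v::euclidean_space \<Rightarrow> 'w::euclidean_space) \<Rightarrow> bool" where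
  "polyfun_vec F \<longleftrightarrow> (\<forall>b\<in>Basis. polyfun (\<lambda>x. F x \<bullet> b))"

text \<open>A (real-valued) function represents an element of F(V) if it agrees with
 a quotient p/q of polynomial functions, q not identically zero, wherever q is nonzero.\<close>
definition ratfun :: "('v::euclidean_space \<Rightarrow> real) \<Rightarrow> bool" where
  "ratfun f \<longleftrightarrow> (\<exists>p q. polyfun p \<and> polyfun q \<and> q \<noteq> (\<lambda>_. 0) \<and>
      (\<forall>x. q x \<noteq> 0 \<longrightarrow> f x = p x / q x))"

text \<open>Equality in F(V) (resp. F(V;W)): agreement off the zero set of some nonzero polynomial.\<close>
definition ratfun_eq :: "('v::euclidean_space \<Rightarrow> 'b) \<Rightarrow> ('v \<Rightarrow> 'b) \<Rightarrow> bool" where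
  "ratfun_eq f g \<longleftrightarrow> (\<exists>q. polyfun q \<and> q \<noteq> (\<lambda>_. 0) \<and> (\<forall>x. q x \<noteq> 0 \<longrightarrow> f x = g x))"

definition A_set :: "nat \<Rightarrow> (nat \<Rightarrow> 'v::euclidean_space \<Rightarrow> 'w::euclidean_space) \<Rightarrow> 'v set" where
  "A_set j R = {X. \<exists>c::nat \<Rightarrow> real. (\<exists>i\<le>j. c i \<noteq> 0) \<and> (\<Sum>i\<le>j. c i *\<^sub>R R i X) = 0}"

definition PVlam :: "('v::euclidean_space \<Rightarrow> real) poly set" where
  "PVlam = {c. \<forall>i. polyfun (coeff c i)}"

definition Eval :: "(nat \<Rightarrow> 'v::euclidean_space \<Rightarrow> 'w::real_vector) \<Rightarrow> ('v \<Rightarrow> real) poly \<Rightarrow> ('v \<Rightarrow> 'w)" where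
  "Eval R c = (\<lambda>x. \<Sum>i\<le>degree c. coeff c i x *\<^sub>R R i x)"

definition Kern_Eval :: "(nat \<Rightarrow> 'v::euclidean_space \<Rightarrow> 'w::real_vector) \<Rightarrow> ('v \<Rightarrow> real) poly set" where
  "Kern_Eval R = {c \<in> PVlam. Eval R c = (\<lambda>_. 0)}"

definition is_ideal_PVlam :: "('v::euclidean_space \<Rightarrow> real) poly set \<Rightarrow> bool" where
  "is_ideal_PVlam I \<longleftrightarrow> I \<subseteq> PVlam \<and> 0 \<in> I \<and> (\<forall>c\<in>I. \<forall>d\<in>I. c + d \<in> I) \<and>
     (\<forall>c\<in>I. \<forall>d\<in>PVlam. d * c \<in> I)"

end

theory Submission
  imports Defs "HOL-Complex_Analysis.Conformal_Mappings" "Jordan_Normal_Form.Char_Poly"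
begin

(* Clearing the denominators of the a_i turns the relation defining them into a relation
   E R^k + p_1 R^(k-1) + ... + p_k R^0 = 0 with polynomial coefficients, i.e. into an element of
   the kernel of Eval_R. Since the kernel is an ideal, its multiples by lambda^j show that the
   same relation holds for R^j, ..., R^(k+j), for every j. It remains to see that E divides every
   p_i.

   On a complex line through a point where R^0, ..., R^(k-1) are independent (a nonzero Gram
   determinant) this becomes a question about univariate polynomials. Near a root t0 of E the
   quotients a_i = p_i/E are bounded on a small circle, so the recurrence makes R^j grow at most
   geometrically there, and by the maximum modulus principle also inside the disc. At generic
   points of the disc R^0, ..., R^(k-1) are independent, so every root of
   lambda^k + a_1 lambda^(k-1) + ... + a_k is bounded, hence so are its coefficients a_i: they have
   no pole at t0, and E divides p_i on the line. Divisibility on all generic lines finally gives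
   divisibility of polynomial functions, by division with remainder in a direction in which E has
   constant leading coefficient. *)

(* Jordan_Normal_Form's notation for its scalar product clashes with the inner product. *)
no_notation scalar_prod (infix \<open>\<bullet>\<close> 70)

lemma sum_apply: "(\<Sum>i\<in>A. f i) x = (\<Sum>i\<in>A. f i x)"
  by (induction A rule: infinite_finite_induct) auto

lemma sum_atMost_split_last: "(\<Sum>n\<le>k. f n) = f k + (\<Sum>n<k. f n)" for k :: nat
  by (simp add: lessThan_Suc_atMost[symmetric] add.commute)

lemma sum_lessThan_rev: "(\<Sum>n<k. g n) = (\<Sum>i=1..k. g (k - i))" for k :: nat
  by (rule sum.reindex_bij_witness[of _ "\<lambda>i. k - i" "\<lambda>n. k - n"]) auto

lemma poly_eq_sum_le_degree:
  fixes x :: "'a::comm_semiring_1"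
  assumes "degree p \<le> N"
  shows "poly p x = (\<Sum>i\<le>N. coeff p i * x ^ i)"
  unfolding poly_altdef using assms
  by (intro sum.mono_neutral_left) (auto simp: coeff_eq_0 not_le)

lemma coeff_mult_at_degree_bounds:
  fixes p q :: "'a::comm_semiring_0 poly"
  assumes "degree p \<le> n" "degree q \<le> m"
  shows "coeff (p * q) (n + m) = coeff p n * coeff q m"
proof -
  have "coeff p i * coeff q (n + m - i) = 0" if "i \<le> n + m" "i \<noteq> n" for i
  proof (cases "i < n")
    case True
    then have "degree q < n + m - i" using assms(2) by linarith
    then show ?thesis by (simp add: coeff_eq_0)
  next
    case False
    then have "degree p < i" using assms(1) that(2) by linarith
    then show ?thesis by (simp add: coeff_eq_0)
  qed
  then have "(\<Sum>i\<le>n + m. coeff p i * coeff q (n + m - i)) = (\<Sum>i\<in>{n}. coeff p i * coeff q (n + m - i))"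
    by (intro sum.mono_neutral_right) auto
  then show ?thesis by (simp add: coeff_mult)
qed

section \<open>Polynomial functions\<close>

lemma polyfun_zero: "polyfun 0"
  using polyfun.const[of 0] by (simp add: zero_fun_def)

lemma polyfun_uminus: "polyfun f \<Longrightarrow> polyfun (\<lambda>x. - f x)"
  using polyfun.mult[OF polyfun.const[of "-1"], of f] by simp

lemma polyfun_subtract: "polyfun f \<Longrightarrow> polyfun g \<Longrightarrow> polyfun (\<lambda>x. f x - g x)"
  using polyfun.add[OF _ polyfun_uminus] by simp

lemma polyfun_sum: "(\<And>i. i \<in> A \<Longrightarrow> polyfun (f i)) \<Longrightarrow> polyfun (\<lambda>x. \<Sum>i\<in>A. f i x)"
  by (induction A rule: infinite_finite_induct) (auto intro: polyfun.const polyfun.add)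

lemma polyfun_prod: "(\<And>i. i \<in> A \<Longrightarrow> polyfun (f i)) \<Longrightarrow> polyfun (\<lambda>x. \<Prod>i\<in>A. f i x)"
  by (induction A rule: infinite_finite_induct) (auto intro: polyfun.const polyfun.mult)

lemma polyfun_vec_const: "polyfun_vec (\<lambda>_. u)"
  by (simp add: polyfun_vec_def polyfun.const)

lemma polyfun_inner:
  fixes F H :: "'v::euclidean_space \<Rightarrow> 'w::euclidean_space"
  assumes "polyfun_vec F" "polyfun_vec H"
  shows "polyfun (\<lambda>x. F x \<bullet> H x)"
proof -
  have "polyfun (\<lambda>x. \<Sum>b\<in>Basis. (F x \<bullet> b) * (H x \<bullet> b))"
    using assms unfolding polyfun_vec_def by (intro polyfun_sum polyfun.mult) auto
  then show ?thesis by (simp add: euclidean_inner[symmetric])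
qed

lemma polyfun_inner_const:
  fixes F :: "'v::euclidean_space \<Rightarrow> 'w::euclidean_space"
  shows "polyfun_vec F \<Longrightarrow> polyfun (\<lambda>x. F x \<bullet> u)"
  using polyfun_inner[OF _ polyfun_vec_const] .

section \<open>Polynomials with polynomial-function coefficients\<close>

definition eval_coeffs :: "'a \<Rightarrow> ('a \<Rightarrow> 'b::zero) poly \<Rightarrow> 'b poly" where
  "eval_coeffs x p = map_poly (\<lambda>c. c x) p"

lemma coeff_eval_coeffs [simp]: "coeff (eval_coeffs x p) n = coeff p n x"
  unfolding eval_coeffs_def by (subst coeff_map_poly) auto

lemma eval_coeffs_0 [simp]: "eval_coeffs x 0 = 0"
  by (rule poly_eqI) simp

lemma eval_coeffs_add [simp]: "eval_coeffs x (p + q) = eval_coeffs x p + eval_coeffs x q"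
  by (rule poly_eqI) simp

lemma eval_coeffs_mult [simp]:
  "eval_coeffs x (p * q) = eval_coeffs x p * eval_coeffs x (q :: ('a \<Rightarrow> 'b::comm_semiring_0) poly)"
  by (rule poly_eqI) (simp add: coeff_mult sum_apply)

lemma eval_coeffs_pCons [simp]: "eval_coeffs x (pCons c p) = pCons (c x) (eval_coeffs x p)"
  by (rule poly_eqI) (simp add: coeff_pCons split: nat.split)

lemma degree_eval_coeffs_le: "degree (eval_coeffs x p) \<le> degree p"
  by (rule degree_le) (simp add: coeff_eq_0)

lemma zero_in_PVlam: "0 \<in> PVlam"
  by (simp add: PVlam_def polyfun_zero)

lemma monom_in_PVlam: "polyfun c \<Longrightarrow> monom c n \<in> PVlam"
  by (simp add: PVlam_def polyfun_zero)

lemma PVlam_add: "p \<in> PVlam \<Longrightarrow> q \<in> PVlam \<Longrightarrow> p + q \<in> PVlam"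
  unfolding PVlam_def by (auto simp: plus_fun_def intro: polyfun.add)

lemma PVlam_diff: "p \<in> PVlam \<Longrightarrow> q \<in> PVlam \<Longrightarrow> p - q \<in> PVlam"
  unfolding PVlam_def by (auto simp: fun_diff_def intro: polyfun_subtract)

lemma PVlam_mult: "p \<in> PVlam \<Longrightarrow> q \<in> PVlam \<Longrightarrow> p * q \<in> PVlam"
  unfolding PVlam_def
  by (auto simp: coeff_mult times_fun_def sum_apply[abs_def] intro!: polyfun_sum polyfun.mult)

lemma PVlam_sum: "(\<And>i. i \<in> A \<Longrightarrow> p i \<in> PVlam) \<Longrightarrow> (\<Sum>i\<in>A. p i) \<in> PVlam"
  by (induction A rule: infinite_finite_induct) (auto intro: zero_in_PVlam PVlam_add)

section \<open>Restriction to lines\<close>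

inductive polyfun_degree_le :: "nat \<Rightarrow> ('v::euclidean_space \<Rightarrow> real) \<Rightarrow> bool" where
  const: "polyfun_degree_le n (\<lambda>_. c)"
| lin: "1 \<le> n \<Longrightarrow> polyfun_degree_le n (\<lambda>x. x \<bullet> b)"
| add: "polyfun_degree_le n f \<Longrightarrow> polyfun_degree_le n g \<Longrightarrow> polyfun_degree_le n (\<lambda>x. f x + g x)"
| mult: "polyfun_degree_le n f \<Longrightarrow> polyfun_degree_le m g \<Longrightarrow> n + m \<le> N \<Longrightarrow>
    polyfun_degree_le N (\<lambda>x. f x * g x)"

lemma polyfun_degree_le_mono: "polyfun_degree_le N f \<Longrightarrow> N \<le> M \<Longrightarrow> polyfun_degree_le M f"
proof (induction arbitrary: M rule: polyfun_degree_le.induct)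
  case (mult n f m g N)
  have "n + m \<le> M" using mult by linarith
  then show ?case by (rule polyfun_degree_le.mult[OF mult.hyps(1,2)])
qed (auto intro: polyfun_degree_le.intros)

lemma polyfun_imp_degree_le: "polyfun f \<Longrightarrow> \<exists>N. polyfun_degree_le N f"
proof (induction rule: polyfun.induct)
  case (add f g)
  then obtain n m where "polyfun_degree_le n f" "polyfun_degree_le m g" by blast
  then have "polyfun_degree_le (max n m) f" "polyfun_degree_le (max n m) g"
    by (auto intro: polyfun_degree_le_mono)
  then show ?case by (blast intro: polyfun_degree_le.add)
qed (blast intro: polyfun_degree_le.intros)+

lemma polyfun_degree_le_zero: "polyfun_degree_le n 0"
  using polyfun_degree_le.const[of n 0] by (simp add: zero_fun_def)

lemma polyfun_degree_le_sum:
  "(\<And>i. i \<in> A \<Longrightarrow> polyfun_degree_le N (f i)) \<Longrightarrow> polyfun_degree_le N (\<lambda>x. \<Sum>i\<in>A. f i x)"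
  by (induction A rule: infinite_finite_induct)
    (auto intro: polyfun_degree_le.const polyfun_degree_le.add)

lemma polyfun_line_expansion:
  fixes v :: "'v::euclidean_space"
  assumes "polyfun_degree_le N f"
  shows "\<exists>C. C \<in> PVlam \<and> degree C \<le> N \<and> (\<forall>x t. f (x + t *\<^sub>R v) = poly (eval_coeffs x C) t) \<and>
      (\<exists>\<gamma>. coeff C N = (\<lambda>_. \<gamma>))"
  using assms
proof (induction rule: polyfun_degree_le.induct)
  case (const n c)
  show ?case
  proof (intro exI conjI)
    show "monom (\<lambda>_. c) 0 \<in> PVlam" by (rule monom_in_PVlam[OF polyfun.const])
    show "coeff (monom (\<lambda>_. c) 0) n = (\<lambda>_. if n = 0 then c else 0)"
      by auto
  qed (auto simp: monom_0)
next
  case (lin n b)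
  let ?C = "[:\<lambda>x. x \<bullet> b, \<lambda>_. v \<bullet> b:]"
  show ?case
  proof (intro exI conjI allI)
    show "?C \<in> PVlam" unfolding PVlam_def
      by (auto simp: coeff_pCons polyfun_zero split: nat.split intro: polyfun.intros)
    show "degree ?C \<le> n" using lin by (auto intro: order.trans[OF degree_pCons_le])
    show "coeff ?C n = (\<lambda>_. if n = 1 then v \<bullet> b else 0)"
      using lin by (auto simp: coeff_pCons split: nat.split)
  qed (simp add: algebra_simps)
next
  case (add n f g)
  then obtain C1 C2 \<gamma>1 \<gamma>2 where C: "C1 \<in> PVlam" "degree C1 \<le> n"
    "\<forall>x t. f (x + t *\<^sub>R v) = poly (eval_coeffs x C1) t" "coeff C1 n = (\<lambda>_. \<gamma>1)"
    "C2 \<in> PVlam" "degree C2 \<le> n" "\<forall>x t. g (x + t *\<^sub>R v) = poly (eval_coeffs x C2) t"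
    "coeff C2 n = (\<lambda>_. \<gamma>2)" by blast
  show ?case
  proof (intro exI conjI allI)
    show "coeff (C1 + C2) n = (\<lambda>_. \<gamma>1 + \<gamma>2)" using C by (simp add: plus_fun_def)
  qed (use C in \<open>auto simp: PVlam_add degree_add_le\<close>)
next
  case (mult n f m g N)
  then obtain C1 C2 \<gamma>1 \<gamma>2 where C: "C1 \<in> PVlam" "degree C1 \<le> n"
    "\<forall>x t. f (x + t *\<^sub>R v) = poly (eval_coeffs x C1) t" "coeff C1 n = (\<lambda>_. \<gamma>1)"
    "C2 \<in> PVlam" "degree C2 \<le> m" "\<forall>x t. g (x + t *\<^sub>R v) = poly (eval_coeffs x C2) t"
    "coeff C2 m = (\<lambda>_. \<gamma>2)" by blast
  have deg: "degree (C1 * C2) \<le> n + m"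
    using C degree_mult_le[of C1 C2] by linarith
  show ?case
  proof (intro exI conjI allI)
    show "degree (C1 * C2) \<le> N" using deg mult.hyps(3) by linarith
    show "coeff (C1 * C2) N = (\<lambda>_. if N = n + m then \<gamma>1 * \<gamma>2 else 0)"
    proof (cases "N = n + m")
      case True
      then show ?thesis using C by (simp add: coeff_mult_at_degree_bounds times_fun_def)
    next
      case False
      then have "degree (C1 * C2) < N" using deg mult.hyps(3) by linarith
      then show ?thesis using False by (simp add: coeff_eq_0 zero_fun_def)
    qed
  qed (use C in \<open>auto simp: PVlam_mult\<close>)
qed

definition line_restriction :: "('v::real_vector \<Rightarrow> real) \<Rightarrow> 'v \<Rightarrow> 'v \<Rightarrow> real poly" where
  "line_restriction f x v = (THE p. \<forall>t. f (x + t *\<^sub>R v) = poly p t)"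

lemma line_restriction_eqI:
  assumes "\<And>t. f (x + t *\<^sub>R v) = poly p t"
  shows "line_restriction f x v = p"
  unfolding line_restriction_def
proof (rule the_equality)
  fix q assume "\<forall>t. f (x + t *\<^sub>R v) = poly q t"
  then have "poly q = poly p" using assms by auto
  then show "q = p" by (simp add: poly_eq_poly_eq_iff)
qed (use assms in blast)

lemma poly_line_restriction:
  fixes f :: "'v::euclidean_space \<Rightarrow> real"
  assumes "polyfun f"
  shows "poly (line_restriction f x v) t = f (x + t *\<^sub>R v)"
proof -
  obtain N where "polyfun_degree_le N f" using polyfun_imp_degree_le[OF assms] by blast
  then obtain C where "\<forall>x t. f (x + t *\<^sub>R v) = poly (eval_coeffs x C) t"
    using polyfun_line_expansion by blast
  then show ?thesis by (simp add: line_restriction_eqI)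
qed

lemma polyfun_zero_if_zero_off_zeros:
  fixes f q :: "'v::euclidean_space \<Rightarrow> real"
  assumes f: "polyfun f" and q: "polyfun q" "q \<noteq> (\<lambda>_. 0)"
    and fq: "\<And>x. q x \<noteq> 0 \<Longrightarrow> f x = 0"
  shows "f y = 0"
proof -
  obtain x where x: "q x \<noteq> 0" using q(2) by auto
  let ?f = "line_restriction f x (y - x)" and ?q = "line_restriction q x (y - x)"
  have "poly (?f * ?q) t = 0" for t
    using fq[of "x + t *\<^sub>R (y - x)"] by (auto simp: poly_line_restriction f q(1))
  then have "?f * ?q = 0" by (simp add: poly_all_0_iff_0[symmetric])
  moreover have "?q \<noteq> 0"
    using poly_line_restriction[OF q(1), of x "y - x" 0] x by auto
  ultimately have "?f = 0" by simp
  then show ?thesis using poly_line_restriction[OF f, of x "y - x" 1] by simp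
qed

lemma polyfun_mult_neq_0:
  fixes f g :: "'v::euclidean_space \<Rightarrow> real"
  assumes "polyfun f" "polyfun g" "f \<noteq> (\<lambda>_. 0)" "g \<noteq> (\<lambda>_. 0)"
  shows "(\<lambda>x. f x * g x) \<noteq> (\<lambda>_. 0)"
proof
  assume fg: "(\<lambda>x. f x * g x) = (\<lambda>_. 0)"
  have "g y = 0" for y
    by (rule polyfun_zero_if_zero_off_zeros[OF assms(2,1,3)]) (use fg in \<open>metis mult_eq_0_iff\<close>)
  then show False using assms(4) by auto
qed

section \<open>Divisibility of polynomial functions\<close>

lemma polyfun_homogeneous_expansion:
  fixes f :: "'v::euclidean_space \<Rightarrow> real"
  assumes "polyfun_degree_le N f"
  shows "\<exists>H. degree H \<le> N \<and> (\<forall>l. polyfun_degree_le l (coeff H l)) \<and>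
    (\<forall>s x. f (s *\<^sub>R x) = poly (eval_coeffs x H) s)"
  using assms
proof (induction rule: polyfun_degree_le.induct)
  case (const n c)
  have "polyfun_degree_le l (coeff [:\<lambda>_. c:] l)" for l
    by (cases l) (auto simp: polyfun_degree_le_zero polyfun_degree_le.const)
  then show ?case by (intro exI[of _ "[:\<lambda>_. c:]"]) auto
next
  case (lin n b)
  have "polyfun_degree_le l (coeff [:0, \<lambda>x. x \<bullet> b:] l)" for l
    by (cases l) (auto simp: polyfun_degree_le_zero polyfun_degree_le.lin
        coeff_pCons split: nat.split)
  then show ?case using lin
    by (intro exI[of _ "[:0, \<lambda>x. x \<bullet> b:]"]) (auto intro: order.trans[OF degree_pCons_le])
next
  case (add n f g)
  then obtain H1 H2 where H: "degree H1 \<le> n" "\<forall>l. polyfun_degree_le l (coeff H1 l)"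
    "\<forall>s x. f (s *\<^sub>R x) = poly (eval_coeffs x H1) s" "degree H2 \<le> n"
    "\<forall>l. polyfun_degree_le l (coeff H2 l)" "\<forall>s x. g (s *\<^sub>R x) = poly (eval_coeffs x H2) s"
    by blast
  show ?case
  proof (intro exI[of _ "H1 + H2"] conjI allI)
    fix l show "polyfun_degree_le l (coeff (H1 + H2) l)"
      using H by (simp add: plus_fun_def polyfun_degree_le.add)
  qed (use H in \<open>auto simp: degree_add_le\<close>)
next
  case (mult n f m g N)
  then obtain H1 H2 where H: "degree H1 \<le> n" "\<forall>l. polyfun_degree_le l (coeff H1 l)"
    "\<forall>s x. f (s *\<^sub>R x) = poly (eval_coeffs x H1) s" "degree H2 \<le> m"
    "\<forall>l. polyfun_degree_le l (coeff H2 l)" "\<forall>s x. g (s *\<^sub>R x) = poly (eval_coeffs x H2) s"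
    by blast
  show ?case
  proof (intro exI[of _ "H1 * H2"] conjI allI)
    show "degree (H1 * H2) \<le> N"
      using H mult.hyps(3) degree_mult_le[of H1 H2] by linarith
    fix l
    have "polyfun_degree_le l (\<lambda>x. \<Sum>i\<le>l. coeff H1 i x * coeff H2 (l - i) x)"
      by (rule polyfun_degree_le_sum) (use H in \<open>auto intro: polyfun_degree_le.mult\<close>)
    then show "polyfun_degree_le l (coeff (H1 * H2) l)"
      by (simp add: coeff_mult times_fun_def sum_apply[abs_def])
  qed (use H in auto)
qed

lemma polyfun_top_component_neq_0:
  fixes D :: "'v::euclidean_space \<Rightarrow> real"
  assumes N: "N = (LEAST N. polyfun_degree_le N D)" and D: "D \<noteq> (\<lambda>_. 0)"
    and H: "degree H \<le> N" "\<And>l. polyfun_degree_le l (coeff H l)"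
      "\<And>s x. D (s *\<^sub>R x) = poly (eval_coeffs x H) s"
  shows "\<exists>v. coeff H N v \<noteq> 0"
proof (rule ccontr)
  assume "\<not> ?thesis"
  then have top: "coeff H N x = 0" for x by blast
  have D_sum: "D x = (\<Sum>l\<le>N. coeff H l x)" for x
    using H(3)[of 1 x] degree_eval_coeffs_le[of x H] H(1)
    by (simp add: poly_eq_sum_le_degree[of _ N])
  show False
  proof (cases N)
    case 0
    then show False using D D_sum top by auto
  next
    case (Suc M)
    then have "D = (\<lambda>x. \<Sum>l\<le>M. coeff H l x)" using D_sum top by auto
    moreover have "polyfun_degree_le M (\<lambda>x. \<Sum>l\<le>M. coeff H l x)"
      by (rule polyfun_degree_le_sum) (auto intro: polyfun_degree_le_mono H(2))
    moreover have "\<not> polyfun_degree_le M D"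
      using Suc N not_less_Least[of M "\<lambda>N. polyfun_degree_le N D"] by simp
    ultimately show False by simp
  qed
qed

text \<open>Take for \<open>v\<close> a point where the top homogeneous component of \<open>D\<close> does not vanish:
  along \<open>v\<close> the leading coefficient is the value of that component at \<open>v\<close>.\<close>

lemma exists_direction_const_lead_coeff:
  fixes D :: "'v::euclidean_space \<Rightarrow> real"
  assumes D: "polyfun D" "D \<noteq> (\<lambda>_. 0)"
  shows "\<exists>v C \<gamma>. C \<in> PVlam \<and> (\<forall>x t. D (x + t *\<^sub>R v) = poly (eval_coeffs x C) t) \<and>
    \<gamma> \<noteq> 0 \<and> lead_coeff C = (\<lambda>_. \<gamma>)"
proof -
  define N where "N = (LEAST N. polyfun_degree_le N D)"
  have N: "polyfun_degree_le N D"
    unfolding N_def using polyfun_imp_degree_le[OF D(1)] by (rule LeastI_ex)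
  obtain H where H: "degree H \<le> N" "\<forall>l. polyfun_degree_le l (coeff H l)"
    "\<forall>s x. D (s *\<^sub>R x) = poly (eval_coeffs x H) s"
    using polyfun_homogeneous_expansion[OF N] by blast
  obtain v where v: "coeff H N v \<noteq> 0"
    using polyfun_top_component_neq_0[OF N_def D(2)] H by blast
  obtain C \<gamma> where C: "C \<in> PVlam" "degree C \<le> N"
    "\<forall>x t. D (x + t *\<^sub>R v) = poly (eval_coeffs x C) t" "coeff C N = (\<lambda>_. \<gamma>)"
    using polyfun_line_expansion[OF N, of v] by blast
  have "poly (eval_coeffs 0 C) t = poly (eval_coeffs v H) t" for t
    using C(3)[rule_format, of 0 t] H(3)[rule_format, of t v] by simp
  then have "eval_coeffs 0 C = eval_coeffs v H"
    using poly_eq_poly_eq_iff by blast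
  then have "coeff (eval_coeffs 0 C) N = coeff (eval_coeffs v H) N" by simp
  then have \<gamma>: "\<gamma> = coeff H N v" using C(4) by simp
  then have "coeff C N \<noteq> 0" using C(4) v by (auto simp: fun_eq_iff)
  then have "degree C = N" using C(2) le_degree by (metis le_antisym)
  then have "lead_coeff C = (\<lambda>_. \<gamma>)" using C(4) by simp
  then show ?thesis using C(1,3) v \<gamma> by blast
qed

lemma PVlam_div_const_lead_coeff:
  fixes F G :: "('v::euclidean_space \<Rightarrow> real) poly"
  assumes "F \<in> PVlam" "G \<in> PVlam" "lead_coeff G = (\<lambda>_. \<gamma>)" "\<gamma> \<noteq> 0"
  shows "\<exists>Q Rm. Q \<in> PVlam \<and> Rm \<in> PVlam \<and> F = Q * G + Rm \<and> (Rm = 0 \<or> degree Rm < degree G)"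
  using assms(1)
proof (induction "degree F" arbitrary: F rule: less_induct)
  case less
  show ?case
  proof (cases "F = 0 \<or> degree F < degree G")
    case True
    then show ?thesis using less.prems by (intro exI[of _ 0] exI[of _ F]) (auto simp: zero_in_PVlam)
  next
    case False
    then have dFG: "degree G \<le> degree F" by auto
    define M where "M = monom (\<lambda>x. lead_coeff F x / \<gamma>) (degree F - degree G)"
    define F' where "F' = F - M * G"
    have "polyfun (\<lambda>x. lead_coeff F x * inverse \<gamma>)"
      using less.prems unfolding PVlam_def by (intro polyfun.mult polyfun.const) auto
    then have M: "M \<in> PVlam" unfolding M_def by (simp add: divide_inverse monom_in_PVlam)
    have "coeff (M * G) (degree F) = lead_coeff F"
      using dFG assms(3,4) by (simp add: M_def coeff_monom_mult times_fun_def)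
    then have top: "coeff F' (degree F) = 0" by (simp add: F'_def)
    have "degree M \<le> degree F - degree G" unfolding M_def by (rule degree_monom_le)
    then have "degree (M * G) \<le> degree F"
      using degree_mult_le[of M G] dFG by linarith
    then have "degree F' \<le> degree F" unfolding F'_def by (meson degree_diff_le le_refl)
    have F': "F' \<in> PVlam" unfolding F'_def by (intro PVlam_diff PVlam_mult less.prems M assms(2))
    show ?thesis
    proof (cases "F' = 0")
      case True
      then have "F = M * G + 0" unfolding F'_def by simp
      then show ?thesis using M by (auto simp: zero_in_PVlam)
    next
      case False
      with top \<open>degree F' \<le> degree F\<close> have "degree F' < degree F"
        by (metis le_neq_implies_less leading_coeff_0_iff)
      then obtain Q Rm where "Q \<in> PVlam" "Rm \<in> PVlam" "F' = Q * G + Rm"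
        "Rm = 0 \<or> degree Rm < degree G"
        using less.hyps F' by blast
      moreover from this have "F = (Q + M) * G + Rm" unfolding F'_def by (simp add: algebra_simps)
      ultimately show ?thesis using M PVlam_add by blast
    qed
  qed
qed

text \<open>Divide in the direction \<open>v\<close> in which \<open>Q\<close> has constant leading coefficient; on every
  line in that direction through a point where \<open>\<delta> \<noteq> 0\<close> the remainder is then divisible by
  the restriction of \<open>Q\<close> although of smaller degree, so it vanishes there, hence everywhere.\<close>

lemma polyfun_dvd_if_dvd_on_lines:
  fixes P Q \<delta> :: "'v::euclidean_space \<Rightarrow> real"
  assumes P: "polyfun P" and Q: "polyfun Q" "Q \<noteq> (\<lambda>_. 0)"
    and \<delta>: "polyfun \<delta>" "\<delta> \<noteq> (\<lambda>_. 0)"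
    and dvd: "\<And>x v. \<delta> x \<noteq> 0 \<Longrightarrow> line_restriction Q x v dvd line_restriction P x v"
  shows "\<exists>g. polyfun g \<and> (\<forall>y. P y = Q y * g y)"
proof -
  obtain v C \<gamma> where C: "C \<in> PVlam" "\<forall>x t. Q (x + t *\<^sub>R v) = poly (eval_coeffs x C) t"
    "\<gamma> \<noteq> 0" "lead_coeff C = (\<lambda>_. \<gamma>)"
    using exists_direction_const_lead_coeff[OF Q] by blast
  obtain N where "polyfun_degree_le N P" using polyfun_imp_degree_le[OF P] by blast
  then obtain F where F: "F \<in> PVlam" "\<forall>x t. P (x + t *\<^sub>R v) = poly (eval_coeffs x F) t"
    using polyfun_line_expansion[of N P v] by blast
  obtain D Rm where D: "D \<in> PVlam" "Rm \<in> PVlam" "F = D * C + Rm" "Rm = 0 \<or> degree Rm < degree C"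
    using PVlam_div_const_lead_coeff[OF F(1) C(1) C(4,3)] by blast
  have Rm_vanishes: "eval_coeffs x Rm = 0" if x: "\<delta> x \<noteq> 0" for x
  proof (rule ccontr)
    assume nz: "eval_coeffs x Rm \<noteq> 0"
    have "line_restriction Q x v = eval_coeffs x C" "line_restriction P x v = eval_coeffs x F"
      using C(2) F(2) by (auto intro: line_restriction_eqI)
    then have "eval_coeffs x C dvd eval_coeffs x F" using dvd[OF x, of v] by simp
    moreover have "eval_coeffs x F = eval_coeffs x D * eval_coeffs x C + eval_coeffs x Rm"
      using D(3) by simp
    ultimately have "eval_coeffs x C dvd eval_coeffs x Rm"
      by (metis dvd_add_right_iff dvd_triv_right)
    then have "degree (eval_coeffs x C) \<le> degree (eval_coeffs x Rm)"
      using nz by (rule dvd_imp_degree_le)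
    moreover have "degree C \<le> degree (eval_coeffs x C)"
      using C(3,4) by (intro le_degree) simp
    ultimately have "degree C \<le> degree Rm"
      using degree_eval_coeffs_le[of x Rm] by linarith
    moreover have "Rm \<noteq> 0" using nz by auto
    ultimately show False using D(4) by simp
  qed
  have "coeff Rm n y = 0" for n y
  proof (rule polyfun_zero_if_zero_off_zeros[OF _ \<delta>])
    show "polyfun (coeff Rm n)" using D(2) unfolding PVlam_def by blast
  next
    fix x assume "\<delta> x \<noteq> 0"
    then show "coeff Rm n x = 0" using Rm_vanishes by (metis coeff_0 coeff_eval_coeffs)
  qed
  then have "Rm = 0" by (simp add: poly_eq_iff fun_eq_iff)
  then have "P y = Q y * coeff D 0 y" for y
    using F(2)[rule_format, of y 0] C(2)[rule_format, of y 0] D(3)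
    by (simp add: poly_0_coeff_0 coeff_mult_0 mult.commute)
  moreover have "polyfun (coeff D 0)" using D(1) unfolding PVlam_def by blast
  ultimately show ?thesis by blast
qed

section \<open>Univariate complex polynomials\<close>

lemma eventually_poly_neq_0_at:
  fixes p :: "complex poly"
  assumes "p \<noteq> 0"
  shows "\<forall>\<^sub>F t in at t0. poly p t \<noteq> 0"
proof -
  have "\<forall>\<^sub>F t in at t0. \<forall>z\<in>{z. poly p z = 0}. t \<noteq> z"
    using assms by (intro eventually_ball_finite poly_roots_finite) (auto intro: eventually_neq_at_within)
  then show ?thesis by eventually_elim auto
qed

lemma poly_eq_0_if_ratio_bounded:
  fixes e p :: "complex poly"
  assumes e: "e \<noteq> 0" "poly e t0 = 0"
    and bounded: "\<forall>\<^sub>F t in at t0. cmod (poly p t / poly e t) \<le> M"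
  shows "poly p t0 = 0"
proof (rule ccontr)
  assume "poly p t0 \<noteq> 0"
  have lim: "(poly q \<longlongrightarrow> poly q t0) (at t0)" for q :: "complex poly"
    using poly_isCont[of t0 q] by (simp add: isCont_def)
  have "filterlim (poly e) (at 0) (at t0)"
    using lim[of e] e eventually_poly_neq_0_at[OF e(1)] by (auto intro: filterlim_atI)
  with lim[of p] have "filterlim (\<lambda>t. poly p t / poly e t) at_infinity (at t0)"
    using \<open>poly p t0 \<noteq> 0\<close> by (rule filterlim_divide_at_infinity)
  then have "filterlim (\<lambda>t. cmod (poly p t / poly e t)) at_top (at t0)"
    by (rule filterlim_at_infinity_imp_norm_at_top)
  then have "\<forall>\<^sub>F t in at t0. cmod (poly p t / poly e t) > M"
    by (simp add: filterlim_at_top_dense)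
  with bounded have "\<forall>\<^sub>F t in at t0. False"
    by (rule eventually_elim2) simp
  then show False by simp
qed

lemma dvd_if_ratio_bounded_at_roots:
  fixes e p :: "complex poly"
  assumes "e \<noteq> 0"
    and "\<And>t0. poly e t0 = 0 \<Longrightarrow> \<exists>M. \<forall>\<^sub>F t in at t0. cmod (poly p t / poly e t) \<le> M"
  shows "e dvd p"
  using assms
proof (induction "degree e" arbitrary: e p rule: less_induct)
  case less
  show ?case
  proof (cases "degree e = 0")
    case True
    then show ?thesis using less.prems(1) by (simp add: is_unit_iff_degree unit_imp_dvd)
  next
    case False
    then obtain t0 where t0: "poly e t0 = 0"
      by (metis fundamental_theorem_of_algebra constant_degree)
    have "poly p t0 = 0"
      using poly_eq_0_if_ratio_bounded[OF less.prems(1) t0] less.prems(2)[OF t0] by blast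
    then obtain p' where p': "p = [:-t0, 1:] * p'"
      using poly_eq_0_iff_dvd by blast
    obtain e' where e': "e = [:-t0, 1:] * e'"
      using t0 poly_eq_0_iff_dvd by blast
    have "e' \<noteq> 0" using e' less.prems(1) by auto
    then have "degree e' < degree e" using e' by (simp add: degree_mult_eq del: mult_pCons_left)
    have "e' dvd p'"
    proof (rule less.hyps[OF \<open>degree e' < degree e\<close> \<open>e' \<noteq> 0\<close>])
      fix t1 assume "poly e' t1 = 0"
      then have "poly e t1 = 0" using e' by simp
      then obtain M where "\<forall>\<^sub>F t in at t1. cmod (poly p t / poly e t) \<le> M"
        using less.prems(2) by blast
      moreover have "poly p t / poly e t = poly p' t / poly e' t" if "t \<noteq> t0" for t
      proof -
        have "poly p t / poly e t = ((t - t0) * poly p' t) / ((t - t0) * poly e' t)"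
          by (simp add: p' e' algebra_simps)
        then show ?thesis using that by simp
      qed
      ultimately have "\<forall>\<^sub>F t in at t1. cmod (poly p' t / poly e' t) \<le> M"
        using eventually_neq_at_within[of t0 t1 UNIV] by (auto elim: eventually_elim2)
      then show "\<exists>M. \<forall>\<^sub>F t in at t1. cmod (poly p' t / poly e' t) \<le> M" by blast
    qed
    then show ?thesis unfolding p' e' by (rule mult_dvd_mono[OF dvd_refl])
  qed
qed

lemma norm_coeff_le_if_roots_bounded:
  fixes p :: "complex poly"
  assumes "lead_coeff p = 1" "\<And>z. poly p z = 0 \<Longrightarrow> cmod z \<le> L" "L \<ge> 0"
  shows "cmod (coeff p n) \<le> (1 + L) ^ degree p"
  using assms(1,2)
proof (induction "degree p" arbitrary: p n rule: less_induct)
  case less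
  show ?case
  proof (cases "degree p = 0")
    case True
    then have "p = [:1:]" using less.prems(1) degree_0_id[OF True] by simp
    then show ?thesis by (cases n) auto
  next
    case False
    then obtain z where z: "poly p z = 0"
      by (metis fundamental_theorem_of_algebra constant_degree)
    then obtain p' where p': "p = [:-z, 1:] * p'" using poly_eq_0_iff_dvd by blast
    have "p' \<noteq> 0" using p' less.prems(1) by auto
    then have deg: "degree p = Suc (degree p')" using p' by (simp add: degree_mult_eq del: mult_pCons_left)
    have "lead_coeff p' = 1"
      using less.prems(1) p' lead_coeff_mult[of "[:-z, 1:]" p'] by (simp del: mult_pCons_left)
    moreover have "cmod w \<le> L" if "poly p' w = 0" for w using less.prems(2)[of w] p' that by simp
    ultimately have IH: "cmod (coeff p' m) \<le> (1 + L) ^ degree p'" for m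
      using less.hyps[of p' m] deg by simp
    have "coeff p n = - z * coeff p' n + (case n of 0 \<Rightarrow> 0 | Suc m \<Rightarrow> coeff p' m)"
      using p' by (simp add: coeff_pCons split: nat.split)
    also have "cmod \<dots> \<le> L * (1 + L) ^ degree p' + (1 + L) ^ degree p'"
    proof (rule norm_triangle_le[OF add_mono])
      show "cmod (- z * coeff p' n) \<le> L * (1 + L) ^ degree p'"
        unfolding norm_mult norm_minus_cancel
        using less.prems(2)[OF z] IH assms(3) by (intro mult_mono) auto
      show "cmod (case n of 0 \<Rightarrow> 0 | Suc m \<Rightarrow> coeff p' m) \<le> (1 + L) ^ degree p'"
        using IH assms(3) by (auto split: nat.split)
    qed
    also have "\<dots> = (1 + L) ^ degree p" using deg by (simp add: algebra_simps)
    finally show ?thesis .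
  qed
qed

lemma norm_poly_le_on_ball:
  fixes q :: "complex poly"
  assumes "\<And>s. s \<in> sphere t0 \<epsilon> \<Longrightarrow> cmod (poly q s) \<le> M" and t: "t \<in> ball t0 \<epsilon>"
  shows "cmod (poly q t) \<le> M"
proof (rule maximum_modulus_frontier[where S = "ball t0 \<epsilon>" and f = "\<lambda>t. poly q t"])
  show "(\<lambda>t. poly q t) holomorphic_on interior (ball t0 \<epsilon>)" by (intro holomorphic_intros)
  show "continuous_on (closure (ball t0 \<epsilon>)) (\<lambda>t. poly q t)" by (intro continuous_intros)
  show "bounded (ball t0 \<epsilon>)" by simp
  have "\<epsilon> > 0" using t by (metis dist_not_less_zero mem_ball not_less order.strict_trans1)
  then show "\<And>z. z \<in> frontier (ball t0 \<epsilon>) \<Longrightarrow> cmod (poly q z) \<le> M" using assms(1) by simp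
qed (use t in simp)

section \<open>Linear recurrences\<close>

lemma le_if_geometric_bound:
  fixes x L c K :: real
  assumes bound: "\<And>j. c * x ^ j \<le> K * L ^ j" and "c > 0" "L > 0"
  shows "x \<le> L"
proof (rule ccontr)
  assume "\<not> x \<le> L"
  then have "x / L > 1" using assms(3) by simp
  then obtain j where "K / c < (x / L) ^ j" using real_arch_pow by blast
  then have "K < c * x ^ j / L ^ j"
    using assms(2) by (simp add: pos_divide_less_eq power_divide mult.commute)
  then have "K * L ^ j < c * x ^ j"
    using assms(3) by (simp add: pos_less_divide_eq)
  then show False using bound[of j] by simp
qed

lemma sum_coeff_linear_factor_mult:
  fixes S :: "'a::comm_ring_1 poly"
  assumes "degree S < k"
  shows "(\<Sum>n\<le>k. coeff ([:-\<mu>, 1:] * S) n * f n) =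
         (\<Sum>n\<le>k. coeff S n * f (Suc n)) - \<mu> * (\<Sum>n\<le>k. coeff S n * f n)"
proof -
  obtain k' where k: "k = Suc k'" using assms by (cases k) auto
  have "(\<Sum>n\<le>k. coeff ([:-\<mu>, 1:] * S) n * f n) =
        (\<Sum>n\<le>k. (case n of 0 \<Rightarrow> 0 | Suc m \<Rightarrow> coeff S m) * f n - \<mu> * (coeff S n * f n))"
    by (intro sum.cong) (auto simp: coeff_pCons algebra_simps split: nat.split)
  also have "\<dots> = (\<Sum>n\<le>k'. coeff S n * f (Suc n)) - \<mu> * (\<Sum>n\<le>k. coeff S n * f n)"
    unfolding sum_subtractf sum_distrib_left[symmetric] k sum.atMost_Suc_shift by simp
  also have "(\<Sum>n\<le>k'. coeff S n * f (Suc n)) = (\<Sum>n\<le>k. coeff S n * f (Suc n))"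
    using assms unfolding k by (simp add: coeff_eq_0)
  finally show ?thesis .
qed

text \<open>If \<open>\<mu>\<close> is a root of the characteristic polynomial \<open>p = (X - \<mu>) S\<close>, then the
  combinations \<open>w\<^sub>j = \<Sum> S\<^sub>n u\<^sub>n\<^sub>+\<^sub>j\<close> satisfy \<open>w\<^sub>j\<^sub>+\<^sub>1 = \<mu> w\<^sub>j\<close>, and independence makes
  some \<open>w\<^sub>0\<close> nonzero; geometric growth of \<open>u\<close> then bounds \<open>|\<mu>|\<close>.\<close>

lemma norm_root_le_if_recurrence:
  fixes p :: "complex poly" and u :: "nat \<Rightarrow> 'b \<Rightarrow> complex"
  assumes p: "lead_coeff p = 1" "degree p = k"
    and rec: "\<And>j b. b \<in> B \<Longrightarrow> (\<Sum>n\<le>k. coeff p n * u (n + j) b) = 0"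
    and indep: "\<And>w. \<forall>b\<in>B. (\<Sum>l<k. w l * u l b) = 0 \<Longrightarrow> \<forall>l<k. w l = 0"
    and growth: "\<And>j b. b \<in> B \<Longrightarrow> cmod (u j b) \<le> K * L ^ j" and L: "L > 0"
    and \<mu>: "poly p \<mu> = 0"
  shows "cmod \<mu> \<le> L"
proof -
  obtain S where S: "p = [:-\<mu>, 1:] * S" using \<mu> poly_eq_0_iff_dvd by blast
  have "S \<noteq> 0"
  proof
    assume "S = 0"
    then have "p = 0" using S by simp
    then show False using p(1) by simp
  qed
  then have deg_S: "degree S < k"
    using S p(2) degree_mult_eq[of "[:-\<mu>, 1:]" S] by (simp del: mult_pCons_left)
  define w where "w j b = (\<Sum>n\<le>k. coeff S n * u (n + j) b)" for j b
  have w_Suc: "w (Suc j) b = \<mu> * w j b" if "b \<in> B" for j b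
  proof -
    have "0 = (\<Sum>n\<le>k. coeff p n * u (n + j) b)" using rec[OF that] by simp
    also have "\<dots> = (\<Sum>n\<le>k. coeff S n * u (Suc n + j) b) - \<mu> * w j b"
      unfolding S w_def by (rule sum_coeff_linear_factor_mult[OF deg_S])
    also have "(\<Sum>n\<le>k. coeff S n * u (Suc n + j) b) = w (Suc j) b" by (simp add: w_def)
    finally show ?thesis by simp
  qed
  have w_pow: "w j b = \<mu> ^ j * w 0 b" if "b \<in> B" for j b
    by (induction j) (simp_all add: w_Suc[OF that])
  obtain b where b: "b \<in> B" "w 0 b \<noteq> 0"
  proof (rule ccontr)
    assume "\<not> thesis"
    moreover have "w 0 b = (\<Sum>l<k. coeff S l * u l b)" for b
      using deg_S by (simp add: w_def sum_atMost_split_last coeff_eq_0)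
    ultimately have "\<forall>b\<in>B. (\<Sum>l<k. coeff S l * u l b) = 0"
      using that by auto
    then have "\<forall>l<k. coeff S l = 0" by (rule indep)
    then have "S = 0" using deg_S by (metis leading_coeff_0_iff)
    then show False using \<open>S \<noteq> 0\<close> by simp
  qed
  define K' where "K' = (\<Sum>n\<le>k. cmod (coeff S n) * (K * L ^ n))"
  have "cmod (w 0 b) * cmod \<mu> ^ j \<le> K' * L ^ j" for j
  proof -
    have "cmod (w 0 b) * cmod \<mu> ^ j = cmod (w j b)"
      by (simp add: w_pow[OF b(1), of j] norm_mult norm_power)
    also have "\<dots> \<le> (\<Sum>n\<le>k. cmod (coeff S n) * cmod (u (n + j) b))"
      unfolding w_def by (rule order.trans[OF norm_sum]) (simp add: norm_mult)
    also have "\<dots> \<le> (\<Sum>n\<le>k. cmod (coeff S n) * (K * L ^ (n + j)))"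
      using growth[OF b(1)] by (intro sum_mono mult_left_mono) auto
    also have "\<dots> = K' * L ^ j"
      unfolding K'_def sum_distrib_right by (rule sum.cong) (simp_all add: power_add mult_ac)
    finally show ?thesis .
  qed
  then show ?thesis by (rule le_if_geometric_bound) (use b(2) L in auto)
qed

lemma recurrence_coeff_bound:
  fixes \<alpha> :: "nat \<Rightarrow> complex" and u :: "nat \<Rightarrow> 'b \<Rightarrow> complex"
  assumes "\<alpha> k = 1"
    and rec: "\<And>j b. b \<in> B \<Longrightarrow> (\<Sum>n\<le>k. \<alpha> n * u (n + j) b) = 0"
    and indep: "\<And>w. \<forall>b\<in>B. (\<Sum>l<k. w l * u l b) = 0 \<Longrightarrow> \<forall>l<k. w l = 0"
    and growth: "\<And>j b. b \<in> B \<Longrightarrow> cmod (u j b) \<le> K * L ^ j" and L: "L > 0"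
    and n: "n \<le> k"
  shows "cmod (\<alpha> n) \<le> (1 + L) ^ k"
proof -
  define p where "p = (\<Sum>m\<le>k. monom (\<alpha> m) m)"
  have coeff_p: "coeff p m = (if m \<le> k then \<alpha> m else 0)" for m
    by (simp add: p_def coeff_sum)
  have "degree p \<le> k" by (rule degree_le) (simp add: coeff_p)
  moreover have "k \<le> degree p" by (rule le_degree) (simp add: coeff_p assms(1))
  ultimately have "degree p = k" by simp
  moreover have "lead_coeff p = 1" using calculation assms(1) by (simp add: coeff_p)
  moreover have "cmod \<mu> \<le> L" if "poly p \<mu> = 0" for \<mu>
  proof (rule norm_root_le_if_recurrence[of p k B u K L])
    show "\<And>j b. b \<in> B \<Longrightarrow> (\<Sum>n\<le>k. coeff p n * u (n + j) b) = 0"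
      using rec by (simp add: coeff_p)
  qed (use calculation indep growth L that in auto)
  ultimately have "cmod (coeff p n) \<le> (1 + L) ^ k"
    using norm_coeff_le_if_roots_bounded[of p L n] L by simp
  then show ?thesis using n by (simp add: coeff_p)
qed

lemma linear_recurrence_growth:
  fixes \<alpha> r :: "nat \<Rightarrow> 'a::real_normed_field"
  assumes rec: "\<And>j. (\<Sum>n\<le>k. \<alpha> n * r (n + j)) = 0" and "\<alpha> k = 1"
    and L: "(\<Sum>n<k. norm (\<alpha> n)) \<le> L" "1 \<le> L"
    and K: "\<And>l. l < k \<Longrightarrow> norm (r l) \<le> K" "0 \<le> K"
  shows "norm (r j) \<le> K * L ^ j"
proof (induction j rule: less_induct)
  case (less j)
  have r_top: "r (k + i) = - (\<Sum>n<k. \<alpha> n * r (n + i))" for i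
    using rec[of i] \<open>\<alpha> k = 1\<close> by (simp add: sum_atMost_split_last add_eq_0_iff add.commute)
  show ?case
  proof (cases "j < k")
    case True
    have "K * 1 \<le> K * L ^ j" by (rule mult_left_mono[OF one_le_power[OF L(2)] K(2)])
    then show ?thesis using K(1)[OF True] by simp
  next
    case False
    define i where "i = j - k"
    have j: "j = k + i" using False by (simp add: i_def)
    show ?thesis
    proof (cases "k = 0")
      case True
      have "0 \<le> K * L ^ j" using K(2) L(2) by simp
      then show ?thesis using r_top[of i] j True by simp
    next
      case False
      define j' where "j' = j - 1"
      have j': "j = Suc j'" using j False by (simp add: j'_def)
      have "norm (r j) \<le> (\<Sum>n<k. norm (\<alpha> n) * norm (r (n + i)))"
        unfolding j r_top norm_minus_cancel by (rule order.trans[OF norm_sum]) (simp add: norm_mult)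
      also have "\<dots> \<le> (\<Sum>n<k. norm (\<alpha> n) * (K * L ^ j'))"
      proof (rule sum_mono, rule mult_left_mono)
        fix n assume "n \<in> {..<k}"
        then have "n + i < j" "n + i \<le> j'" using j j' by auto
        have "norm (r (n + i)) \<le> K * L ^ (n + i)" by (rule less) fact
        also have "\<dots> \<le> K * L ^ j'"
          by (rule mult_left_mono[OF power_increasing[OF \<open>n + i \<le> j'\<close> L(2)] K(2)])
        finally show "norm (r (n + i)) \<le> K * L ^ j'" .
      qed simp
      also have "\<dots> \<le> L * (K * L ^ j')"
        unfolding sum_distrib_right[symmetric] using L K by (intro mult_right_mono) auto
      also have "\<dots> = K * L ^ j" by (simp add: j')
      finally show ?thesis .
    qed
  qed
qed

section \<open>Gram determinants\<close>

definition gram_det :: "nat \<Rightarrow> (nat \<Rightarrow> 'a::real_inner) \<Rightarrow> real" where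
  "gram_det k u = det (mat k k (\<lambda>(l, m). u l \<bullet> u m))"

lemma det_neq_0_imp_kernel_trivial:
  fixes f :: "nat \<times> nat \<Rightarrow> 'a::idom"
  assumes "det (mat k k f) \<noteq> 0" and "\<And>l. l < k \<Longrightarrow> (\<Sum>m<k. f (l, m) * w m) = 0"
  shows "\<forall>l<k. w l = 0"
proof -
  have "mat k k f *\<^sub>v vec k w = 0\<^sub>v k"
    using assms(2) by (intro eq_vecI) (auto simp: scalar_prod_def atLeast0LessThan)
  moreover have "mat k k f \<in> carrier_mat k k" "vec k w \<in> carrier_vec k" by auto
  ultimately have "vec k w = 0\<^sub>v k" using det_0_iff_vec_prod_zero assms(1) by blast
  then show ?thesis by (metis index_vec index_zero_vec(1))
qed

lemma gram_det_neq_0_if_independent: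
  fixes u :: "nat \<Rightarrow> 'a::real_inner"
  assumes indep: "\<And>w. (\<Sum>l<k. w l *\<^sub>R u l) = 0 \<Longrightarrow> \<forall>l<k. w l = 0"
  shows "gram_det k u \<noteq> 0"
proof
  assume "gram_det k u = 0"
  then obtain v where v: "v \<in> carrier_vec k" "v \<noteq> 0\<^sub>v k" "mat k k (\<lambda>(l, m). u l \<bullet> u m) *\<^sub>v v = 0\<^sub>v k"
    using det_0_iff_vec_prod_zero[of "mat k k (\<lambda>(l, m). u l \<bullet> u m)" k] unfolding gram_det_def by auto
  define z where "z = (\<Sum>m<k. v $ m *\<^sub>R u m)"
  have "u l \<bullet> z = 0" if "l < k" for l
  proof -
    have "(mat k k (\<lambda>(l, m). u l \<bullet> u m) *\<^sub>v v) $ l = 0" using v(3) that by simp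
    then show ?thesis
      using that v(1) by (simp add: z_def inner_sum_right scalar_prod_def atLeast0LessThan mult.commute)
  qed
  then have "z \<bullet> z = 0" by (simp add: z_def inner_sum_left)
  then have "\<forall>l<k. v $ l = 0" using indep[of "\<lambda>l. v $ l"] by (simp add: z_def)
  then have "v = 0\<^sub>v k" using v(1) by (auto intro: eq_vecI)
  then show False using v(2) by simp
qed

lemma independent_if_coord_gram_det_neq_0:
  fixes u :: "nat \<Rightarrow> 'b \<Rightarrow> 'a::idom"
  assumes "det (mat k k (\<lambda>(l, m). \<Sum>b\<in>B. u l b * u m b)) \<noteq> 0"
    and "\<forall>b\<in>B. (\<Sum>l<k. w l * u l b) = 0"
  shows "\<forall>l<k. w l = 0"
proof (rule det_neq_0_imp_kernel_trivial[OF assms(1)])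
  fix l
  have "(\<Sum>m<k. (\<Sum>b\<in>B. u l b * u m b) * w m) = (\<Sum>b\<in>B. u l b * (\<Sum>m<k. w m * u m b))"
    by (simp add: sum_distrib_left sum_distrib_right mult_ac sum.swap[of _ "{..<k}"])
  then show "(\<Sum>m<k. (case (l, m) of (l, m) \<Rightarrow> \<Sum>b\<in>B. u l b * u m b) * w m) = 0"
    using assms(2) by simp
qed

lemma poly_det_mat: "poly (det (mat k k f)) t = det (mat k k (\<lambda>lm. poly (f lm) t))"
proof -
  have "poly (det (mat k k f)) t = det (map_mat (\<lambda>p. poly p t) (mat k k f))"
    by (simp add: comm_ring_hom.hom_det[OF poly_hom.comm_ring_hom_axioms])
  also have "map_mat (\<lambda>p. poly p t) (mat k k f) = mat k k (\<lambda>lm. poly (f lm) t)"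
    by (rule eq_matI) auto
  finally show ?thesis .
qed

lemma det_mat_of_real: "det (mat k k (\<lambda>lm. of_real (f lm))) = (of_real (det (mat k k f)) :: complex)"
proof -
  have "of_real (det (mat k k f)) = det (map_mat (of_real :: real \<Rightarrow> complex) (mat k k f))"
    by (simp add: comm_ring_hom.hom_det[OF of_real_hom.comm_ring_hom_axioms])
  also have "map_mat of_real (mat k k f) = mat k k (\<lambda>lm. (of_real (f lm) :: complex))"
    by (rule eq_matI) auto
  finally show ?thesis by simp
qed

lemma polyfun_gram_det:
  fixes R :: "nat \<Rightarrow> 'v::euclidean_space \<Rightarrow> 'w::euclidean_space"
  assumes "\<And>l. polyfun_vec (R l)"
  shows "polyfun (\<lambda>y. gram_det k (\<lambda>l. R l y))"
proof -
  have "gram_det k (\<lambda>l. R l y) =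
      (\<Sum>p\<in>{p. p permutes {0..<k}}. signof p * (\<Prod>l = 0..<k. R l y \<bullet> R (p l) y))" for y
    unfolding gram_det_def
    by (subst det_def'[of _ k]) (auto intro!: sum.cong prod.cong simp: permutes_in_image)
  moreover have "polyfun (\<lambda>y. \<Sum>p\<in>{p. p permutes {0..<k}}. signof p * (\<Prod>l = 0..<k. R l y \<bullet> R (p l) y))"
    by (intro polyfun_sum polyfun.mult polyfun.const polyfun_prod polyfun_inner assms)
  ultimately show ?thesis by simp
qed

lemma gram_det_not_identically_zero:
  assumes "k = (LEAST j. A_set j R = UNIV)"
  shows "(\<lambda>y. gram_det k (\<lambda>l. R l y)) \<noteq> (\<lambda>_. 0)"
proof (cases "k = 0")
  case True
  then show ?thesis by (simp add: gram_det_def fun_eq_iff)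
next
  case False
  then have "A_set (k - 1) R \<noteq> UNIV"
    using assms not_less_Least[of "k - 1" "\<lambda>j. A_set j R = UNIV"] by simp
  then obtain X where X: "X \<notin> A_set (k - 1) R" by auto
  have "\<forall>l<k. w l = 0" if "(\<Sum>l<k. w l *\<^sub>R R l X) = 0" for w
  proof -
    have "{..k - 1} = {..<k}" using False by auto
    then show ?thesis using X that unfolding A_set_def by auto
  qed
  then have "gram_det k (\<lambda>l. R l X) \<noteq> 0"
    by (rule gram_det_neq_0_if_independent[where u = "\<lambda>l. R l X"])
  then show ?thesis by (auto simp: fun_eq_iff)
qed

section \<open>Recurrences with polynomial coefficients\<close>

lemma poly_recurrence_divided:
  fixes \<rho> c :: "nat \<Rightarrow> 'a::field poly"
  assumes "(\<Sum>n\<le>k. c n * \<rho> (n + j)) = 0"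
  shows "(\<Sum>n\<le>k. poly (c n) t / poly (c k) t * poly (\<rho> (n + j)) t) = 0"
proof -
  have "(\<Sum>n\<le>k. poly (c n) t * poly (\<rho> (n + j)) t) = 0"
    using arg_cong[OF assms, of "\<lambda>q. poly q t"] by (simp add: poly_sum)
  then show ?thesis by (simp add: sum_divide_distrib[symmetric])
qed

lemma recurrence_growth_on_ball:
  fixes \<rho> :: "nat \<Rightarrow> 'b \<Rightarrow> complex poly" and c :: "nat \<Rightarrow> complex poly"
  assumes B: "finite B" and rec: "\<And>j b. b \<in> B \<Longrightarrow> (\<Sum>n\<le>k. c n * \<rho> (n + j) b) = 0"
    and sphere: "\<And>s. s \<in> sphere z \<epsilon> \<Longrightarrow> poly (c k) s \<noteq> 0"
  shows "\<exists>K L. L \<ge> 1 \<and>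
    (\<forall>j b t. b \<in> B \<longrightarrow> t \<in> ball z \<epsilon> \<longrightarrow> cmod (poly (\<rho> j b) t) \<le> K * L ^ j)"
proof -
  define \<alpha> where "\<alpha> s m = poly (c m) s / poly (c k) s" for s m
  obtain A where A: "\<And>s. s \<in> sphere z \<epsilon> \<Longrightarrow> norm (\<Sum>m<k. cmod (\<alpha> s m)) \<le> A"
  proof (rule continuous_on_compact_bound)
    show "continuous_on (sphere z \<epsilon>) (\<lambda>s. \<Sum>m<k. cmod (\<alpha> s m))"
      unfolding \<alpha>_def using sphere by (intro continuous_intros) auto
  qed auto
  obtain K where K: "K \<ge> 0" "\<And>s. s \<in> sphere z \<epsilon> \<Longrightarrow> norm (\<Sum>l<k. \<Sum>b\<in>B. cmod (poly (\<rho> l b) s)) \<le> K"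
  proof (rule continuous_on_compact_bound)
    show "continuous_on (sphere z \<epsilon>) (\<lambda>s. \<Sum>l<k. \<Sum>b\<in>B. cmod (poly (\<rho> l b) s))"
      by (intro continuous_intros)
  qed auto
  define L where "L = max 1 A"
  have "cmod (poly (\<rho> j b) t) \<le> K * L ^ j" if b: "b \<in> B" and t: "t \<in> ball z \<epsilon>" for j b t
  proof (rule norm_poly_le_on_ball[OF _ t])
    fix s assume s: "s \<in> sphere z \<epsilon>"
    have K_bound: "cmod (poly (\<rho> l b) s) \<le> K" if "l < k" for l
    proof -
      have "cmod (poly (\<rho> l b) s) \<le> (\<Sum>b\<in>B. cmod (poly (\<rho> l b) s))"
        using b B by (intro member_le_sum) auto
      also have "\<dots> \<le> (\<Sum>l<k. \<Sum>b\<in>B. cmod (poly (\<rho> l b) s))"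
        using that by (intro member_le_sum[of l "{..<k}" "\<lambda>l. \<Sum>b\<in>B. cmod (poly (\<rho> l b) s)"])
          (auto intro: sum_nonneg)
      also have "\<dots> \<le> K" using K(2)[OF s] by simp
      finally show ?thesis .
    qed
    show "cmod (poly (\<rho> j b) s) \<le> K * L ^ j"
    proof (rule linear_recurrence_growth[where \<alpha> = "\<alpha> s" and r = "\<lambda>j. poly (\<rho> j b) s"])
      show "(\<Sum>n\<le>k. \<alpha> s n * poly (\<rho> (n + i) b) s) = 0" for i
        using poly_recurrence_divided[OF rec[OF b]] by (simp add: \<alpha>_def)
      show "\<alpha> s k = 1" using sphere[OF s] by (simp add: \<alpha>_def)
      show "(\<Sum>m<k. cmod (\<alpha> s m)) \<le> L" using A[OF s] by (simp add: L_def)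
    qed (simp_all add: K_bound K(1) L_def)
  qed
  then show ?thesis by (intro exI[of _ K] exI[of _ L]) (simp add: L_def)
qed

lemma recurrence_lead_coeff_dvd:
  fixes \<rho> :: "nat \<Rightarrow> 'b \<Rightarrow> complex poly" and c :: "nat \<Rightarrow> complex poly"
  assumes B: "finite B" and ck: "c k \<noteq> 0"
    and G: "det (mat k k (\<lambda>(l, m). \<Sum>b\<in>B. \<rho> l b * \<rho> m b)) \<noteq> 0"
    and rec: "\<And>j b. b \<in> B \<Longrightarrow> (\<Sum>n\<le>k. c n * \<rho> (n + j) b) = 0"
    and n: "n \<le> k"
  shows "c k dvd c n"
proof (rule dvd_if_ratio_bounded_at_roots[OF ck])
  fix t0 :: complex
  define G where "G = det (mat k k (\<lambda>(l, m). \<Sum>b\<in>B. \<rho> l b * \<rho> m b))"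
  obtain \<epsilon> where \<epsilon>: "\<epsilon> > 0"
    and nz: "\<And>t. t \<noteq> t0 \<Longrightarrow> dist t t0 < 2 * \<epsilon> \<Longrightarrow> poly (c k) t \<noteq> 0 \<and> poly G t \<noteq> 0"
  proof -
    have "\<forall>\<^sub>F t in at t0. poly (c k * G) t \<noteq> 0"
      using ck G by (intro eventually_poly_neq_0_at) (simp add: G_def)
    then obtain d where "d > 0" "\<And>t. t \<noteq> t0 \<Longrightarrow> dist t t0 < d \<Longrightarrow> poly (c k * G) t \<noteq> 0"
      unfolding eventually_at by blast
    then show ?thesis by (intro that[of "d / 2"]) auto
  qed
  have sphere: "poly (c k) s \<noteq> 0" if "s \<in> sphere t0 \<epsilon>" for s
    using nz[of s] that \<epsilon> by (auto simp: dist_commute)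
  obtain K L where L: "L \<ge> 1"
    and growth: "\<And>j b t. b \<in> B \<Longrightarrow> t \<in> ball t0 \<epsilon> \<Longrightarrow> cmod (poly (\<rho> j b) t) \<le> K * L ^ j"
    using recurrence_growth_on_ball[where B = B and k = k and c = c and \<rho> = \<rho> and z = t0 and \<epsilon> = \<epsilon>,
        OF B rec sphere] by blast
  have "cmod (poly (c n) t / poly (c k) t) \<le> (1 + L) ^ k" if t: "t \<noteq> t0" "dist t t0 < \<epsilon>" for t
  proof (rule recurrence_coeff_bound[where \<alpha> = "\<lambda>m. poly (c m) t / poly (c k) t"
        and B = B and u = "\<lambda>j b. poly (\<rho> j b) t"])
    have nz_t: "poly (c k) t \<noteq> 0" "poly G t \<noteq> 0" using nz[of t] t \<epsilon> by auto
    then show "poly (c k) t / poly (c k) t = 1" by simp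
    show "\<forall>l<k. w l = 0" if "\<forall>b\<in>B. (\<Sum>l<k. w l * poly (\<rho> l b) t) = 0" for w
    proof (rule independent_if_coord_gram_det_neq_0[where u = "\<lambda>l b. poly (\<rho> l b) t"])
      show "det (mat k k (\<lambda>(l, m). \<Sum>b\<in>B. poly (\<rho> l b) t * poly (\<rho> m b) t)) \<noteq> 0"
        using nz_t(2) by (simp add: G_def poly_det_mat poly_sum case_prod_unfold)
    qed (use that in simp)
    show "\<And>j b. b \<in> B \<Longrightarrow> cmod (poly (\<rho> j b) t) \<le> K * L ^ j"
      using growth t by (simp add: dist_commute)
  qed (use poly_recurrence_divided[OF rec] n L in auto)
  then have "\<forall>\<^sub>F t in at t0. cmod (poly (c n) t / poly (c k) t) \<le> (1 + L) ^ k"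
    unfolding eventually_at using \<epsilon> by blast
  then show "\<exists>M. \<forall>\<^sub>F t in at t0. cmod (poly (c n) t / poly (c k) t) \<le> M" by blast
qed

interpretation of_real_poly_hom: map_poly_comm_ring_hom "of_real :: real \<Rightarrow> complex" ..

lemma line_restriction_dvd_if_recurrence:
  fixes R :: "nat \<Rightarrow> 'v::euclidean_space \<Rightarrow> 'w::euclidean_space" and c :: "nat \<Rightarrow> 'v \<Rightarrow> real"
  assumes R: "\<And>l. polyfun_vec (R l)" and c: "\<And>n. n \<le> k \<Longrightarrow> polyfun (c n)"
    and rec: "\<And>j y. (\<Sum>n\<le>k. c n y *\<^sub>R R (n + j) y) = 0"
    and x: "gram_det k (\<lambda>l. R l x) \<noteq> 0" "c k x \<noteq> 0" and n: "n \<le> k"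
  shows "line_restriction (c k) x v dvd line_restriction (c n) x v"
proof -
  let ?C = "map_poly (of_real :: real \<Rightarrow> complex)"
  define \<rho> where "\<rho> l b = line_restriction (\<lambda>y. R l y \<bullet> b) x v" for l b
  define \<gamma> where "\<gamma> m = line_restriction (c m) x v" for m
  have poly_\<rho>: "poly (\<rho> l b) t = R l (x + t *\<^sub>R v) \<bullet> b" for l b t
    unfolding \<rho>_def by (rule poly_line_restriction[OF polyfun_inner_const[OF R]])
  have poly_\<gamma>: "poly (\<gamma> m) t = c m (x + t *\<^sub>R v)" if "m \<le> k" for m t
    unfolding \<gamma>_def by (rule poly_line_restriction[OF c[OF that]])
  have rec_line: "(\<Sum>m\<le>k. \<gamma> m * \<rho> (m + j) b) = 0" for j b
  proof (rule poly_ext)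
    fix t
    have "poly (\<Sum>m\<le>k. \<gamma> m * \<rho> (m + j) b) t = (\<Sum>m\<le>k. c m (x + t *\<^sub>R v) *\<^sub>R R (m + j) (x + t *\<^sub>R v)) \<bullet> b"
      by (simp add: poly_sum poly_\<rho> poly_\<gamma> inner_sum_left)
    then show "poly (\<Sum>m\<le>k. \<gamma> m * \<rho> (m + j) b) t = poly 0 t" by (simp add: rec)
  qed
  have "?C (\<gamma> k) dvd ?C (\<gamma> n)"
  proof (rule recurrence_lead_coeff_dvd[where B = Basis and \<rho> = "\<lambda>l b. ?C (\<rho> l b)"])
    show "?C (\<gamma> k) \<noteq> 0" using poly_\<gamma>[of k 0] x(2) by auto
    have "poly (det (mat k k (\<lambda>(l, m). \<Sum>b\<in>Basis. ?C (\<rho> l b) * ?C (\<rho> m b)))) 0 =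
        of_real (gram_det k (\<lambda>l. R l x))"
      by (simp add: gram_det_def poly_det_mat case_prod_unfold poly_sum poly_\<rho>
          euclidean_inner[symmetric] det_mat_of_real[symmetric] flip: of_real_mult of_real_sum)
    then show "det (mat k k (\<lambda>(l, m). \<Sum>b\<in>Basis. ?C (\<rho> l b) * ?C (\<rho> m b))) \<noteq> 0"
      using x(1) by auto
    show "(\<Sum>m\<le>k. ?C (\<gamma> m) * ?C (\<rho> (m + j) b)) = 0" for j b
      using arg_cong[OF rec_line[of j b], of ?C]
      by (simp add: of_real_poly_hom.hom_sum of_real_poly_hom.hom_mult)
  qed (use n in simp_all)
  then show ?thesis unfolding \<gamma>_def by (rule of_real_hom.dvd_map_poly_hom_imp_dvd)
qed

lemma polyfun_recurrence_lead_coeff_dvd: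
  fixes R :: "nat \<Rightarrow> 'v::euclidean_space \<Rightarrow> 'w::euclidean_space" and c :: "nat \<Rightarrow> 'v \<Rightarrow> real"
  assumes R: "\<And>l. polyfun_vec (R l)" and c: "\<And>n. n \<le> k \<Longrightarrow> polyfun (c n)" "c k \<noteq> (\<lambda>_. 0)"
    and rec: "\<And>j y. (\<Sum>n\<le>k. c n y *\<^sub>R R (n + j) y) = 0"
    and gram: "(\<lambda>y. gram_det k (\<lambda>l. R l y)) \<noteq> (\<lambda>_. 0)" and n: "n \<le> k"
  shows "\<exists>g. polyfun g \<and> (\<forall>y. c n y = c k y * g y)"
proof (rule polyfun_dvd_if_dvd_on_lines[where \<delta> = "\<lambda>y. gram_det k (\<lambda>l. R l y) * c k y"])
  have G: "polyfun (\<lambda>y. gram_det k (\<lambda>l. R l y))" by (rule polyfun_gram_det[OF R])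
  then show "polyfun (\<lambda>y. gram_det k (\<lambda>l. R l y) * c k y)"
    using c(1)[OF order_refl] by (rule polyfun.mult)
  show "(\<lambda>y. gram_det k (\<lambda>l. R l y) * c k y) \<noteq> (\<lambda>_. 0)"
    by (rule polyfun_mult_neq_0[OF G c(1)[OF order_refl] gram c(2)])
  fix x v assume "gram_det k (\<lambda>l. R l x) * c k x \<noteq> 0"
  then show "line_restriction (c k) x v dvd line_restriction (c n) x v"
    using line_restriction_dvd_if_recurrence[where c = c and k = k, OF R c(1) rec _ _ n] by simp
qed (use c n in auto)

section \<open>The kernel of the evaluation map\<close>

lemma Eval_eq_sum_le:
  assumes "degree c \<le> N"
  shows "Eval R c x = (\<Sum>i\<le>N. coeff c i x *\<^sub>R R i x)"
  unfolding Eval_def using assms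
  by (intro sum.mono_neutral_left) (auto simp: coeff_eq_0)

lemma Eval_0: "Eval R 0 = (\<lambda>_. 0)"
  by (simp add: Eval_def fun_eq_iff)

lemma Eval_add: "Eval R (p + q) = (\<lambda>x. Eval R p x + Eval R q x)"
proof
  fix x
  let ?N = "max (degree p) (degree q)"
  have "Eval R (p + q) x = (\<Sum>i\<le>?N. coeff (p + q) i x *\<^sub>R R i x)"
    by (rule Eval_eq_sum_le) (simp add: degree_add_le)
  also have "\<dots> = Eval R p x + Eval R q x"
    by (simp add: Eval_eq_sum_le[of _ ?N] scaleR_add_left sum.distrib)
  finally show "Eval R (p + q) x = Eval R p x + Eval R q x" .
qed

lemma Eval_sum: "Eval R (\<Sum>i\<in>A. p i) = (\<lambda>x. \<Sum>i\<in>A. Eval R (p i) x)"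
  by (induction A rule: infinite_finite_induct) (simp_all add: Eval_0 Eval_add)

lemma Eval_monom: "Eval R (monom c m) = (\<lambda>x. c x *\<^sub>R R m x)"
proof
  fix x
  have "Eval R (monom c m) x = (\<Sum>i\<le>m. coeff (monom c m) i x *\<^sub>R R i x)"
    by (rule Eval_eq_sum_le) (rule degree_monom_le)
  also have "\<dots> = c x *\<^sub>R R m x"
    by (simp add: coeff_monom if_distrib[of "\<lambda>f. f x"] if_distrib[of "\<lambda>a. a *\<^sub>R R _ x"] cong: if_cong)
  finally show "Eval R (monom c m) x = c x *\<^sub>R R m x" .
qed

lemma Kern_Eval_shift:
  assumes ideal: "is_ideal_PVlam (Kern_Eval R)" and c: "\<And>n. n \<le> N \<Longrightarrow> polyfun (c n)"
    and rel: "\<And>y. (\<Sum>n\<le>N. c n y *\<^sub>R R n y) = 0"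
  shows "(\<Sum>n\<le>N. c n y *\<^sub>R R (n + j) y) = 0"
proof -
  define C where "C = (\<Sum>n\<le>N. monom (c n) n)"
  have "C \<in> Kern_Eval R"
    using c rel by (auto simp: Kern_Eval_def C_def Eval_sum Eval_monom intro!: PVlam_sum monom_in_PVlam)
  moreover have "monom 1 j \<in> PVlam"
    by (rule monom_in_PVlam) (simp add: one_fun_def polyfun.const)
  ultimately have "monom 1 j * C \<in> Kern_Eval R"
    using ideal unfolding is_ideal_PVlam_def by blast
  moreover have "monom 1 j * C = (\<Sum>n\<le>N. monom (c n) (n + j))"
    by (simp add: C_def sum_distrib_left mult_monom add.commute)
  ultimately show ?thesis
    by (simp add: Kern_Eval_def Eval_sum Eval_monom fun_eq_iff)
qed

section \<open>Clearing denominators\<close>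

lemma ratfun_common_denominator:
  fixes f :: "'i \<Rightarrow> 'v::euclidean_space \<Rightarrow> real"
  assumes "finite I" "\<And>i. i \<in> I \<Longrightarrow> ratfun (f i)"
  shows "\<exists>E p. polyfun E \<and> E \<noteq> (\<lambda>_. 0) \<and>
    (\<forall>i\<in>I. polyfun (p i) \<and> (\<forall>x. E x \<noteq> 0 \<longrightarrow> E x * f i x = p i x))"
  using assms
proof (induction I rule: finite_induct)
  case empty
  show ?case by (intro exI[of _ "\<lambda>_. 1"]) (auto intro: polyfun.const simp: fun_eq_iff)
next
  case (insert i I)
  then obtain E p where E: "polyfun E" "E \<noteq> (\<lambda>_. 0)"
    and p: "\<forall>j\<in>I. polyfun (p j) \<and> (\<forall>x. E x \<noteq> 0 \<longrightarrow> E x * f j x = p j x)" by auto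
  obtain P Q where PQ: "polyfun P" "polyfun Q" "Q \<noteq> (\<lambda>_. 0)" "\<And>x. Q x \<noteq> 0 \<Longrightarrow> f i x = P x / Q x"
    using insert.prems[of i] unfolding ratfun_def by auto
  define p' where "p' j = (if j = i then (\<lambda>x. P x * E x) else (\<lambda>x. p j x * Q x))" for j
  have "polyfun (p' j) \<and> (\<forall>x. E x * Q x \<noteq> 0 \<longrightarrow> E x * Q x * f j x = p' j x)"
    if "j \<in> insert i I" for j
  proof (cases "j = i")
    case True
    then show ?thesis using PQ E by (auto simp: p'_def intro: polyfun.mult)
  next
    case False
    then have "j \<in> I" "polyfun (p j)" "\<And>x. E x \<noteq> 0 \<Longrightarrow> E x * f j x = p j x"
      using that p by auto
    then show ?thesis using False PQ(2) by (auto simp: p'_def intro: polyfun.mult)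
  qed
  moreover have "polyfun (\<lambda>x. E x * Q x)" by (intro polyfun.mult E(1) PQ(2))
  moreover have "(\<lambda>x. E x * Q x) \<noteq> (\<lambda>_. 0)" by (rule polyfun_mult_neq_0[OF E(1) PQ(2) E(2) PQ(3)])
  ultimately show ?case by blast
qed

lemma cleared_relation:
  fixes R :: "nat \<Rightarrow> 'v::euclidean_space \<Rightarrow> 'w::euclidean_space"
  assumes R: "\<And>i. polyfun_vec (R i)"
    and c: "\<And>n. n \<le> k \<Longrightarrow> polyfun (c n)" "c k \<noteq> (\<lambda>_. 0)"
    and a: "\<And>n x. n < k \<Longrightarrow> c k x \<noteq> 0 \<Longrightarrow> c k x * a (k - n) x = c n x"
    and rel: "ratfun_eq (R k) (\<lambda>x. - (\<Sum>i=1..k. a i x *\<^sub>R R (k - i) x))"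
  shows "(\<Sum>n\<le>k. c n y *\<^sub>R R n y) = 0"
proof -
  obtain q where q: "polyfun q" "q \<noteq> (\<lambda>_. 0)"
    and q_rel: "\<And>x. q x \<noteq> 0 \<Longrightarrow> R k x = - (\<Sum>i=1..k. a i x *\<^sub>R R (k - i) x)"
    using rel unfolding ratfun_eq_def by blast
  have vanishes: "(\<Sum>n\<le>k. c n x *\<^sub>R R n x) = 0" if "q x * c k x \<noteq> 0" for x
  proof -
    have "(\<Sum>n<k. c n x *\<^sub>R R n x) = (\<Sum>n<k. c k x *\<^sub>R (a (k - n) x *\<^sub>R R n x))"
      using a that by (intro sum.cong) auto
    also have "\<dots> = c k x *\<^sub>R (\<Sum>i=1..k. a i x *\<^sub>R R (k - i) x)"
      by (simp add: scaleR_sum_right sum_lessThan_rev[of _ k])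
    finally show ?thesis using q_rel[of x] that by (simp add: sum_atMost_split_last)
  qed
  have "(\<Sum>n\<le>k. c n y *\<^sub>R R n y) \<bullet> u = 0" for u
  proof (rule polyfun_zero_if_zero_off_zeros[of _ "\<lambda>x. q x * c k x"])
    show "polyfun (\<lambda>y. (\<Sum>n\<le>k. c n y *\<^sub>R R n y) \<bullet> u)"
      unfolding inner_sum_left inner_scaleR_left
      by (intro polyfun_sum polyfun.mult c polyfun_inner_const R) auto
    show "polyfun (\<lambda>x. q x * c k x)" by (intro polyfun.mult q(1) c) auto
    show "(\<lambda>x. q x * c k x) \<noteq> (\<lambda>_. 0)" by (intro polyfun_mult_neq_0 q c) auto
  qed (simp add: vanishes)
  from this[of "\<Sum>n\<le>k. c n y *\<^sub>R R n y"] show ?thesis by simp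
qed

theorem mainTheorem7:
  fixes R :: "nat \<Rightarrow> 'v::euclidean_space \<Rightarrow> 'w::euclidean_space"
    and a :: "nat \<Rightarrow> 'v \<Rightarrow> real"
    and k :: nat
  assumes R_poly: "\<And>i. polyfun_vec (R i)"
    and k_def: "k = (LEAST j. A_set j R = UNIV)"
    and a_rat: "\<And>i. i \<in> {1..k} \<Longrightarrow> ratfun (a i)"
    and a_rel: "ratfun_eq (R k) (\<lambda>x. - (\<Sum>i=1..k. a i x *\<^sub>R R (k - i) x))"
    and ideal: "is_ideal_PVlam (Kern_Eval R)"
  shows "\<forall>i\<in>{1..k}. \<exists>p. polyfun p \<and> ratfun_eq (a i) p"
proof
  fix i assume i: "i \<in> {1..k}"
  obtain E p where E: "polyfun E" "E \<noteq> (\<lambda>_. 0)"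
    and p: "\<forall>i\<in>{1..k}. polyfun (p i) \<and> (\<forall>x. E x \<noteq> 0 \<longrightarrow> E x * a i x = p i x)"
    using ratfun_common_denominator[of "{1..k}" a] a_rat by auto
  define c where "c n = (if n = k then E else p (k - n))" for n
  have c_poly: "polyfun (c n)" if "n \<le> k" for n
    using E(1) p that by (auto simp: c_def)
  have "(\<Sum>n\<le>k. c n y *\<^sub>R R n y) = 0" for y
    by (rule cleared_relation[OF R_poly c_poly _ _ a_rel]) (use E p in \<open>auto simp: c_def\<close>)
  then have rec: "(\<Sum>n\<le>k. c n y *\<^sub>R R (n + j) y) = 0" for j y
    by (intro Kern_Eval_shift[OF ideal] c_poly)
  obtain g where g: "polyfun g" "\<forall>y. c (k - i) y = E y * g y"
    using polyfun_recurrence_lead_coeff_dvd[where c = c and k = k, OF R_poly c_poly _ rec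
        gram_det_not_identically_zero[OF k_def], of "k - i"] E(2)
    by (auto simp: c_def)
  have "c (k - i) = p i" using i by (auto simp: c_def)
  then have "E x * a i x = E x * g x" if "E x \<noteq> 0" for x
    using p i g(2) that by auto
  then have "ratfun_eq (a i) g" unfolding ratfun_eq_def using E by auto
  then show "\<exists>p. polyfun p \<and> ratfun_eq (a i) p" using g(1) by blast
qed

end
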